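(* For $\mathbf{x}=(x_1,\dots,x_N)^{\mathrm T}\in\mathbb{R}^N$ define $$\ell_{\mathrm{bin}}(\mathbf{x})=N\sum_{n=1}^N x_n^4-\Big(\sum_{n=1}^N x_n^2\Big)^2.$$ Then $\ell_{\mathrm{bin}}(\mathbf{x})\ge0$ for all $\mathbf{x}$, and $\ell_{\mathrm{bin}}(\mathbf{x})=0$ if and only if $\mathbf{x}\in\{-\alpha,+\alpha\}^N$ for some $\alpha\in\mathbb{R}$. Furthermore, $\ell_{\mathrm{bin}}$ has no spurious stationary points: $\nabla\ell_{\mathrm{bin}}(\mathbf{x})=\mathbf{0}$ holds only if $\mathbf{x}\in\{-\alpha,+\alpha\}^N$ for some $\alpha\in\mathbb{R}$.
   Context: A spurious stationary point of a differentiable function $\ell$ whose zero set is $\mathcal{X}$ is a point $\mathbf{x}\notin\mathcal{X}$ with $\nabla\ell(\mathbf{x})=\mathbf{0}$. *)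

theory Defs
  imports "HOL-Analysis.Analysis"
begin

definition ell_bin :: "real ^ 'n \<Rightarrow> real" where
  "ell_bin x = real CARD('n) * (\<Sum>n\<in>UNIV. (x $ n) ^ 4) - (\<Sum>n\<in>UNIV. (x $ n) ^ 2) ^ 2"

definition in_pm_cube :: "real \<Rightarrow> real ^ 'n \<Rightarrow> bool" where
  "in_pm_cube \<alpha> x \<longleftrightarrow> (\<forall>n. x $ n \<in> {-\<alpha>, \<alpha>})"

end

theory Submission
  imports Defs
begin

text \<open>With \<open>a\<^sub>i = x\<^sub>i\<^sup>2\<close>, Lagrange's identity gives
  \<open>2 \<ell>(x) = \<Sum>\<^sub>i \<Sum>\<^sub>j (a\<^sub>i - a\<^sub>j)\<^sup>2\<close>, which is nonnegative and vanishes exactly when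
  all \<open>|x\<^sub>i|\<close> coincide. Since \<open>\<ell>\<close> is homogeneous of degree 4, Euler's relation
  \<open>\<langle>\<nabla>\<ell>(x), x\<rangle> = 4 \<ell>(x)\<close> shows that every stationary point is a zero.\<close>

lemma sum_sum_square_diff:
  fixes a :: "'a \<Rightarrow> real"
  assumes "finite A"
  shows "(\<Sum>i\<in>A. \<Sum>j\<in>A. (a i - a j)\<^sup>2) = 2 * (real (card A) * (\<Sum>i\<in>A. (a i)\<^sup>2) - (\<Sum>i\<in>A. a i)\<^sup>2)"
proof -
  have "(\<Sum>i\<in>A. \<Sum>j\<in>A. (a i - a j)\<^sup>2)
      = (\<Sum>i\<in>A. \<Sum>j\<in>A. (a i)\<^sup>2) + (\<Sum>i\<in>A. \<Sum>j\<in>A. (a j)\<^sup>2) - 2 * (\<Sum>i\<in>A. \<Sum>j\<in>A. a i * a j)"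
    by (simp add: power2_diff sum.distrib sum_subtractf sum_distrib_left mult.assoc)
  also have "\<dots> = 2 * real (card A) * (\<Sum>i\<in>A. (a i)\<^sup>2) - 2 * (\<Sum>i\<in>A. a i) * (\<Sum>j\<in>A. a j)"
    by (simp add: sum_product sum_distrib_left[symmetric] mult.commute)
  finally show ?thesis
    by (simp add: power2_eq_square algebra_simps)
qed

lemma ell_bin_eq_sum_sum_square_diff:
  fixes x :: "real ^ 'n"
  shows "2 * ell_bin x = (\<Sum>i\<in>UNIV. \<Sum>j\<in>UNIV. ((x $ i)\<^sup>2 - (x $ j)\<^sup>2)\<^sup>2)"
  using sum_sum_square_diff[of UNIV "\<lambda>i. (x $ i)\<^sup>2"]
  by (simp add: ell_bin_def power_mult[symmetric])

lemma ell_bin_nonneg: "ell_bin x \<ge> 0"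
proof -
  have "0 \<le> (\<Sum>i\<in>UNIV. \<Sum>j\<in>UNIV. ((x $ i)\<^sup>2 - (x $ j)\<^sup>2)\<^sup>2)"
    by (intro sum_nonneg) simp
  then show ?thesis
    using ell_bin_eq_sum_sum_square_diff[of x] by linarith
qed

lemma ell_bin_eq_0_iff: "ell_bin x = 0 \<longleftrightarrow> (\<forall>i j. (x $ i)\<^sup>2 = (x $ j)\<^sup>2)"
proof -
  have "ell_bin x = 0 \<longleftrightarrow> (\<Sum>i\<in>UNIV. \<Sum>j\<in>UNIV. ((x $ i)\<^sup>2 - (x $ j)\<^sup>2)\<^sup>2) = 0"
    using ell_bin_eq_sum_sum_square_diff[of x] by linarith
  also have "\<dots> \<longleftrightarrow> (\<forall>i j. ((x $ i)\<^sup>2 - (x $ j)\<^sup>2)\<^sup>2 = 0)"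
    by (simp add: sum_nonneg sum_nonneg_eq_0_iff)
  finally show ?thesis
    by simp
qed

lemma ex_in_pm_cube_iff: "(\<exists>\<alpha>. in_pm_cube \<alpha> x) \<longleftrightarrow> (\<forall>i j. (x $ i)\<^sup>2 = (x $ j)\<^sup>2)"
proof
  assume "\<exists>\<alpha>. in_pm_cube \<alpha> x"
  then obtain \<alpha> where "in_pm_cube \<alpha> x" ..
  then have "x $ i = -\<alpha> \<or> x $ i = \<alpha>" for i
    by (simp add: in_pm_cube_def)
  then have "(x $ i)\<^sup>2 = \<alpha>\<^sup>2" for i
    by (metis power2_minus)
  then show "\<forall>i j. (x $ i)\<^sup>2 = (x $ j)\<^sup>2"
    by simp
next
  assume "\<forall>i j. (x $ i)\<^sup>2 = (x $ j)\<^sup>2"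
  then have "in_pm_cube \<bar>x $ i\<bar> x" for i
    by (auto simp: in_pm_cube_def power2_eq_iff abs_if)
  then show "\<exists>\<alpha>. in_pm_cube \<alpha> x" ..
qed

lemma ell_bin_has_derivative:
  fixes x :: "real ^ 'n"
  shows "(ell_bin has_derivative (\<lambda>h. real CARD('n) * (\<Sum>n\<in>UNIV. 4 * h $ n * (x $ n) ^ 3)
     - 2 * (\<Sum>n\<in>UNIV. 2 * h $ n * x $ n) * (\<Sum>n\<in>UNIV. (x $ n)\<^sup>2))) (at x)"
  unfolding ell_bin_def[abs_def]
  by (rule derivative_eq_intros bounded_linear_imp_has_derivative[OF bounded_linear_vec_nth] refl
      | simp)+

lemma ell_bin_derivative_at_self:
  assumes "(ell_bin has_derivative D) (at x)"
  shows "D x = 4 * ell_bin x"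
proof -
  have "D = (\<lambda>h. real CARD('a) * (\<Sum>n\<in>UNIV. 4 * h $ n * (x $ n) ^ 3)
     - 2 * (\<Sum>n\<in>UNIV. 2 * h $ n * x $ n) * (\<Sum>n\<in>UNIV. (x $ n)\<^sup>2))"
    using has_derivative_unique[OF assms ell_bin_has_derivative] .
  moreover have "(\<Sum>n\<in>UNIV. 4 * x $ n * (x $ n) ^ 3) = 4 * (\<Sum>n\<in>UNIV. (x $ n) ^ 4)"
    and "(\<Sum>n\<in>UNIV. 2 * x $ n * x $ n) = 2 * (\<Sum>n\<in>UNIV. (x $ n)\<^sup>2)"
    by (simp_all add: sum_distrib_left eval_nat_numeral mult.assoc)
  ultimately show ?thesis
    by (simp add: ell_bin_def algebra_simps power2_eq_square)
qed

theorem mainTheorem3: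
  shows "(\<forall>x :: real ^ 'n. ell_bin x \<ge> 0)
    \<and> (\<forall>x :: real ^ 'n. ell_bin x = 0 \<longleftrightarrow> (\<exists>\<alpha>::real. in_pm_cube \<alpha> x))
    \<and> (\<forall>x :: real ^ 'n. (GDERIV ell_bin x :> 0) \<longrightarrow> (\<exists>\<alpha>::real. in_pm_cube \<alpha> x))"
proof (intro conjI allI impI)
  fix x :: "real ^ 'n"
  show "ell_bin x \<ge> 0"
    by (rule ell_bin_nonneg)
  show zero_iff: "ell_bin x = 0 \<longleftrightarrow> (\<exists>\<alpha>. in_pm_cube \<alpha> x)"
    by (simp only: ell_bin_eq_0_iff ex_in_pm_cube_iff)
  assume "GDERIV ell_bin x :> 0"
  then have "x \<bullet> 0 = 4 * ell_bin x"
    unfolding gderiv_def by (rule ell_bin_derivative_at_self)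
  then show "\<exists>\<alpha>. in_pm_cube \<alpha> x"
    using zero_iff by simp
qed

end
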